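(* Let $X$ be a real Banach space. If $\Phi:X^*\to 2^X$ is $w^*$-maximal cyclically monotone with $D(\Phi)\neq\emptyset$, then there exists a proper convex weak$^*$-lower semicontinuous function $g:X^*\to(-\infty,+\infty]$ such that $\Phi(x^* )=\partial g(x^* )\cap X$ for every $x^*\in X^*$.
   Context: $X$ is identified with its canonical image in $X^{**}$; $\partial g(x^* )\cap X=\{x\in X:\langle y^*-x^*,x\rangle\le g(y^* )-g(x^* )\ \forall y^*\in X^*\}$ for $x^*\in\operatorname{dom} g$, empty otherwise. For $\Phi:X^*\to2^X$, $D(\Phi)=\{x^*:\Phi(x^* )\ne\emptyset\}$, $\mathrm{Gr}\,\Phi=\{(x^*,x):x\in\Phi(x^* )\}$. $\Phi$ is $w^*$-monotone if $\langle x-y,x^*-y^*\rangle\ge0$ whenever $x\in\Phi(x^* )$, $y\in\Phi(y^* )$. $\Phi$ is $w^*$-cyclically monotone if for every $n\ge2$, all $x_1^*,\dots,x_n^*\in D(\Phi)$ with $x_{n+1}^*=x_1^*$ and all $x_k\in\Phi(x_k^* )$, $\sum_{k=1}^n\langle x_k,x_k^*-x_{k+1}^*\rangle\ge0$. $\Phi$ is $w^*$-maximal cyclically monotone if it is $w^*$-monotone and $\Phi=\Psi$ whenever $\Psi$ is $w^*$-cyclically monotone with $\mathrm{Gr}\,\Phi\subset\mathrm{Gr}\,\Psi$. *)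

theory Defs
  imports "HOL-Analysis.Analysis"
begin

(* X is a real Banach space ('a::banach); X^* is the type of continuous linear functionals
   (blinfun); the pairing is blinfun_apply. Functions X^* -> (-inf,+inf] are ereal-valued. *)

definition wstar_topology :: "('a::real_normed_vector \<Rightarrow>\<^sub>L real) topology" where
  "wstar_topology = topology_generated_by
     {{xs. blinfun_apply xs x \<in> U} | x U. open (U::real set)}"

definition wstar_lsc :: "(('a::real_normed_vector \<Rightarrow>\<^sub>L real) \<Rightarrow> ereal) \<Rightarrow> bool" where
  "wstar_lsc g \<longleftrightarrow> (\<forall>c::ereal. closedin wstar_topology {xs. g xs \<le> c})"

definition proper_fun :: "('b \<Rightarrow> ereal) \<Rightarrow> bool" where
  "proper_fun g \<longleftrightarrow> (\<forall>x. g x \<noteq> -\<infinity>) \<and> (\<exists>x. g x \<noteq> \<infinity>)"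

definition convex_efun :: "('b::real_vector \<Rightarrow> ereal) \<Rightarrow> bool" where
  "convex_efun g \<longleftrightarrow> (\<forall>x y t. 0 < t \<and> t < 1 \<longrightarrow>
      g ((1 - t) *\<^sub>R x + t *\<^sub>R y) \<le> ereal (1 - t) * g x + ereal t * g y)"

definition subdiff_X :: "(('a::real_normed_vector \<Rightarrow>\<^sub>L real) \<Rightarrow> ereal) \<Rightarrow> ('a \<Rightarrow>\<^sub>L real) \<Rightarrow> 'a set" where
  "subdiff_X g xs = (if g xs < \<infinity> then
      {x. \<forall>ys. ereal (blinfun_apply (ys - xs) x) \<le> g ys - g xs} else {})"

definition wstar_monotone :: "(('a::real_normed_vector \<Rightarrow>\<^sub>L real) \<Rightarrow> 'a set) \<Rightarrow> bool" where
  "wstar_monotone \<Phi> \<longleftrightarrow> (\<forall>xs ys x y. x \<in> \<Phi> xs \<longrightarrow> y \<in> \<Phi> ys \<longrightarrow>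
      blinfun_apply (xs - ys) (x - y) \<ge> 0)"

(* cycles indexed 0..n-1, x^*_n = x^*_0 via mod n *)
definition wstar_cyclically_monotone :: "(('a::real_normed_vector \<Rightarrow>\<^sub>L real) \<Rightarrow> 'a set) \<Rightarrow> bool" where
  "wstar_cyclically_monotone \<Phi> \<longleftrightarrow> (\<forall>n::nat. \<forall>xs::nat \<Rightarrow> ('a \<Rightarrow>\<^sub>L real). \<forall>x::nat \<Rightarrow> 'a.
      n \<ge> 2 \<longrightarrow> (\<forall>k<n. x k \<in> \<Phi> (xs k)) \<longrightarrow>
      (\<Sum>k<n. blinfun_apply (xs k - xs (Suc k mod n)) (x k)) \<ge> 0)"

definition wstar_max_cyclically_monotone :: "(('a::real_normed_vector \<Rightarrow>\<^sub>L real) \<Rightarrow> 'a set) \<Rightarrow> bool" where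
  "wstar_max_cyclically_monotone \<Phi> \<longleftrightarrow> wstar_monotone \<Phi> \<and> wstar_cyclically_monotone \<Phi> \<and>
     (\<forall>\<Psi>. wstar_cyclically_monotone \<Psi> \<and> (\<forall>xs. \<Phi> xs \<subseteq> \<Psi> xs) \<longrightarrow> \<Psi> = \<Phi>)"

end

theory Submission
  imports Defs
begin

text \<open>Rockafellar's construction: fix \<open>p\<^sub>0 \<in> \<Phi> a\<^sub>0\<close> and let \<open>g y\<close> be the supremum, over all
  finite chains \<open>a\<^sub>0, \<dots>, a\<^sub>n\<close> with \<open>p\<^sub>k \<in> \<Phi> a\<^sub>k\<close>, of
  \<open>\<Sum>k<n. \<langle>a\<^sub>k\<^sub>+\<^sub>1 - a\<^sub>k, p\<^sub>k\<rangle> + \<langle>y - a\<^sub>n, p\<^sub>n\<rangle>\<close>.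
  As a supremum of weak*-continuous affine functions, \<open>g\<close> is convex and weak*-lsc; cyclic
  monotonicity gives \<open>g a\<^sub>0 \<le> 0\<close>, so \<open>g\<close> is proper; appending a pair \<open>q \<in> \<Phi> y\<close> to the chains
  shows \<open>q \<in> \<partial>g y\<close>. Hence \<open>\<Phi>\<close> is contained in \<open>\<partial>g \<inter> X\<close>, which is itself cyclically monotone,
  and maximality yields equality.\<close>

lemma topspace_wstar_topology:
  "topspace (wstar_topology :: ('a::real_normed_vector \<Rightarrow>\<^sub>L real) topology) = UNIV"
  unfolding wstar_topology_def topology_generated_by_topspace
  by (rule ccontr) (auto intro: exI[of _ 0] dest!: spec[of _ UNIV])

lemma openin_wstar_evaluation:
  assumes "open U"
  shows "openin (wstar_topology :: ('a::real_normed_vector \<Rightarrow>\<^sub>L real) topology)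
           {xs. blinfun_apply xs x \<in> U}"
  unfolding wstar_topology_def by (rule topology_generated_by_Basis) (use assms in blast)

lemma convex_efun_SUP_affine:
  "convex_efun (\<lambda>y::'a::real_normed_vector \<Rightarrow>\<^sub>L real.
     SUP i\<in>I. ereal (c i + blinfun_apply y (p i)))"
  unfolding convex_efun_def
proof (intro allI impI)
  fix x y :: "'a \<Rightarrow>\<^sub>L real" and t :: real
  assume t: "0 < t \<and> t < 1"
  let ?g = "\<lambda>y. SUP i\<in>I. ereal (c i + blinfun_apply y (p i))"
  show "?g ((1 - t) *\<^sub>R x + t *\<^sub>R y) \<le> ereal (1 - t) * ?g x + ereal t * ?g y"
  proof (rule SUP_least)
    fix i assume i: "i \<in> I"
    have "ereal (c i + blinfun_apply ((1 - t) *\<^sub>R x + t *\<^sub>R y) (p i))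
        = ereal (1 - t) * ereal (c i + blinfun_apply x (p i)) + ereal t * ereal (c i + blinfun_apply y (p i))"
      by (simp add: blinfun.add_left blinfun.diff_left blinfun.scaleR_left algebra_simps)
    also have "\<dots> \<le> ereal (1 - t) * ?g x + ereal t * ?g y"
      by (intro add_mono ereal_mult_left_mono SUP_upper i) (use t in auto)
    finally show "ereal (c i + blinfun_apply ((1 - t) *\<^sub>R x + t *\<^sub>R y) (p i))
        \<le> ereal (1 - t) * ?g x + ereal t * ?g y" .
  qed
qed

lemma wstar_lsc_SUP_affine:
  "wstar_lsc (\<lambda>y::'a::real_normed_vector \<Rightarrow>\<^sub>L real.
     SUP i\<in>I. ereal (c i + blinfun_apply y (p i)))"
  unfolding wstar_lsc_def
proof
  fix b :: ereal
  let ?g = "\<lambda>y. SUP i\<in>I. ereal (c i + blinfun_apply y (p i))"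
  have "open {r::real. b < ereal (c i + r)}" for i
    by (rule open_Collect_less) (auto intro!: continuous_intros)
  then have "openin wstar_topology {y::'a \<Rightarrow>\<^sub>L real. b < ereal (c i + blinfun_apply y (p i))}" for i
    using openin_wstar_evaluation by fastforce
  moreover have "UNIV - {y. ?g y \<le> b} = (\<Union>i\<in>I. {y. b < ereal (c i + blinfun_apply y (p i))})"
    by (auto simp: SUP_le_iff not_le)
  ultimately have "openin wstar_topology (UNIV - {y. ?g y \<le> b})"
    by (metis (no_types, lifting) openin_Union imageE)
  then show "closedin wstar_topology {y. ?g y \<le> b}"
    by (simp add: closedin_def topspace_wstar_topology)
qed

lemma sum_lessThan_Suc_mod:
  fixes f :: "nat \<Rightarrow> 'b::comm_monoid_add"
  shows "(\<Sum>k<n. f (Suc k mod n)) = (\<Sum>k<n. f k)"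
proof (cases n)
  case (Suc m)
  have "(\<Sum>k<Suc m. f (Suc k mod Suc m)) = (\<Sum>k<m. f (Suc k)) + f 0"
    by (simp add: sum.lessThan_Suc)
  also have "\<dots> = (\<Sum>k<Suc m. f k)"
    by (subst sum.lessThan_Suc_shift) (simp add: add.commute)
  finally show ?thesis using Suc by simp
qed simp

lemma wstar_cyclically_monotone_subdiff_X:
  assumes "\<forall>x. g x \<noteq> -\<infinity>"
  shows "wstar_cyclically_monotone (subdiff_X g)"
  unfolding wstar_cyclically_monotone_def
proof (intro allI impI)
  fix n :: nat and xs :: "nat \<Rightarrow> ('a \<Rightarrow>\<^sub>L real)" and x :: "nat \<Rightarrow> 'a"
  assume n: "2 \<le> n" and x: "\<forall>k<n. x k \<in> subdiff_X g (xs k)"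
  define r where "r k = real_of_ereal (g (xs k))" for k
  have finite: "g (xs k) = ereal (r k)" if "k < n" for k
  proof -
    have "g (xs k) < \<infinity>" using x that by (auto simp: subdiff_X_def split: if_splits)
    then show ?thesis using assms unfolding r_def by (cases "g (xs k)") auto
  qed
  have step: "blinfun_apply (xs (Suc k mod n) - xs k) (x k) \<le> r (Suc k mod n) - r k"
    if k: "k < n" for k
  proof -
    have "ereal (blinfun_apply (xs (Suc k mod n) - xs k) (x k)) \<le> g (xs (Suc k mod n)) - g (xs k)"
      using x k by (auto simp: subdiff_X_def split: if_splits)
    then show ?thesis using finite[OF k] finite[of "Suc k mod n"] n by simp
  qed
  have "(\<Sum>k<n. blinfun_apply (xs (Suc k mod n) - xs k) (x k)) \<le> (\<Sum>k<n. r (Suc k mod n) - r k)"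
    using step by (intro sum_mono) auto
  also have "\<dots> = 0"
    by (simp add: sum_subtractf sum_lessThan_Suc_mod)
  finally show "0 \<le> (\<Sum>k<n. blinfun_apply (xs k - xs (Suc k mod n)) (x k))"
    by (simp add: blinfun.diff_left sum_subtractf)
qed

definition chain_sum :: "nat \<Rightarrow> (nat \<Rightarrow> ('a::real_normed_vector \<Rightarrow>\<^sub>L real)) \<Rightarrow> (nat \<Rightarrow> 'a) \<Rightarrow>
    ('a \<Rightarrow>\<^sub>L real) \<Rightarrow> real" where
  "chain_sum n a p y =
     (\<Sum>k<n. blinfun_apply (a (Suc k) - a k) (p k)) + blinfun_apply (y - a n) (p n)"

definition chains :: "(('a::real_normed_vector \<Rightarrow>\<^sub>L real) \<Rightarrow> 'a set) \<Rightarrow> ('a \<Rightarrow>\<^sub>L real) \<Rightarrow> 'a \<Rightarrow>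
    (nat \<times> (nat \<Rightarrow> ('a \<Rightarrow>\<^sub>L real)) \<times> (nat \<Rightarrow> 'a)) set" where
  "chains \<Phi> a0 p0 = {(n, a, p). a 0 = a0 \<and> p 0 = p0 \<and> (\<forall>k\<le>n. p k \<in> \<Phi> (a k))}"

definition rockafellar_fun :: "(('a::real_normed_vector \<Rightarrow>\<^sub>L real) \<Rightarrow> 'a set) \<Rightarrow> ('a \<Rightarrow>\<^sub>L real) \<Rightarrow> 'a \<Rightarrow>
    ('a \<Rightarrow>\<^sub>L real) \<Rightarrow> ereal" where
  "rockafellar_fun \<Phi> a0 p0 y = (SUP (n, a, p)\<in>chains \<Phi> a0 p0. ereal (chain_sum n a p y))"

lemma chain_sum_affine: "chain_sum n a p y = chain_sum n a p 0 + blinfun_apply y (p n)"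
  unfolding chain_sum_def by (simp add: blinfun.diff_left blinfun.minus_left)

lemma chain_sum_le_rockafellar_fun:
  "(n, a, p) \<in> chains \<Phi> a0 p0 \<Longrightarrow> ereal (chain_sum n a p y) \<le> rockafellar_fun \<Phi> a0 p0 y"
  unfolding rockafellar_fun_def by (rule SUP_upper2) auto

lemma trivial_chain: "p0 \<in> \<Phi> a0 \<Longrightarrow> (0, \<lambda>_. a0, \<lambda>_. p0) \<in> chains \<Phi> a0 p0"
  unfolding chains_def by auto

lemma chains_snoc:
  assumes "(n, a, p) \<in> chains \<Phi> a0 p0" and "q \<in> \<Phi> y"
  shows "(Suc n, a(Suc n := y), p(Suc n := q)) \<in> chains \<Phi> a0 p0"
    and "chain_sum (Suc n) (a(Suc n := y)) (p(Suc n := q)) z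
           = chain_sum n a p y + blinfun_apply (z - y) q"
  using assms by (auto simp: chains_def le_Suc_eq chain_sum_def)

lemma rockafellar_fun_eq_SUP_affine:
  "rockafellar_fun \<Phi> a0 p0 =
     (\<lambda>y. SUP i\<in>chains \<Phi> a0 p0. ereal ((\<lambda>(n, a, p). chain_sum n a p 0) i
                                       + blinfun_apply y ((\<lambda>(n, a, p). p n) i)))"
  unfolding rockafellar_fun_def
  by (intro ext SUP_cong refl) (clarsimp, rule chain_sum_affine)

lemma rockafellar_fun_not_MInfty: "p0 \<in> \<Phi> a0 \<Longrightarrow> rockafellar_fun \<Phi> a0 p0 y \<noteq> -\<infinity>"
  using chain_sum_le_rockafellar_fun[OF trivial_chain, of p0 \<Phi> a0 y] by auto

text \<open>The closed chain \<open>a\<^sub>0, \<dots>, a\<^sub>n, a\<^sub>0\<close> is exactly a cycle as in the definition of cyclic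
  monotonicity, and its sum is \<open>- chain_sum n a p a\<^sub>0\<close>.\<close>
lemma rockafellar_fun_base_nonpos:
  assumes cm: "wstar_cyclically_monotone \<Phi>"
  shows "rockafellar_fun \<Phi> a0 p0 a0 \<le> 0"
  unfolding rockafellar_fun_def
proof (rule SUP_least, clarify)
  fix n a p assume "(n, a, p) \<in> chains \<Phi> a0 p0"
  then have a0: "a 0 = a0" and p: "\<forall>k\<le>n. p k \<in> \<Phi> (a k)" by (auto simp: chains_def)
  show "ereal (chain_sum n a p a0) \<le> 0"
  proof (cases n)
    case 0 then show ?thesis using a0 by (simp add: chain_sum_def)
  next
    case (Suc m)
    have "0 \<le> (\<Sum>k<Suc n. blinfun_apply (a k - a (Suc k mod Suc n)) (p k))"
      by (rule cm[unfolded wstar_cyclically_monotone_def, rule_format])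
        (use p Suc in \<open>auto simp: less_Suc_eq_le\<close>)
    also have "\<dots> = (\<Sum>k<n. blinfun_apply (a k - a (Suc k)) (p k)) + blinfun_apply (a n - a 0) (p n)"
      by (simp add: sum.lessThan_Suc)
    also have "\<dots> = - chain_sum n a p a0"
      unfolding chain_sum_def a0[symmetric] by (simp add: blinfun.diff_left sum_subtractf)
    finally show ?thesis by simp
  qed
qed

lemma rockafellar_fun_subgradient_ineq:
  assumes "q \<in> \<Phi> y" and "p0 \<in> \<Phi> a0"
  shows "rockafellar_fun \<Phi> a0 p0 y + ereal (blinfun_apply (z - y) q) \<le> rockafellar_fun \<Phi> a0 p0 z"
proof -
  have "rockafellar_fun \<Phi> a0 p0 y + ereal (blinfun_apply (z - y) q)
      = (SUP i\<in>chains \<Phi> a0 p0. (\<lambda>(n, a, p). ereal (chain_sum n a p y)) i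
                                  + ereal (blinfun_apply (z - y) q))"
    unfolding rockafellar_fun_def
    by (rule SUP_ereal_add_left[symmetric]) (use trivial_chain[of p0 \<Phi> a0, OF assms(2)] in auto)
  also have "\<dots> \<le> rockafellar_fun \<Phi> a0 p0 z"
  proof (rule SUP_least, clarify)
    fix n a p assume c: "(n, a, p) \<in> chains \<Phi> a0 p0"
    show "ereal (chain_sum n a p y) + ereal (blinfun_apply (z - y) q) \<le> rockafellar_fun \<Phi> a0 p0 z"
      using chain_sum_le_rockafellar_fun[OF chains_snoc(1)[OF c assms(1)], of z]
      by (simp add: chains_snoc(2)[OF c assms(1)])
  qed
  finally show ?thesis .
qed

lemma mem_subdiff_X_rockafellar_fun:
  assumes cm: "wstar_cyclically_monotone \<Phi>" and p0: "p0 \<in> \<Phi> a0" and q: "q \<in> \<Phi> y"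
  shows "q \<in> subdiff_X (rockafellar_fun \<Phi> a0 p0) y"
proof -
  let ?g = "rockafellar_fun \<Phi> a0 p0"
  have "?g y + ereal (blinfun_apply (a0 - y) q) \<le> 0"
    using rockafellar_fun_subgradient_ineq[OF q p0, of a0] rockafellar_fun_base_nonpos[OF cm, of a0 p0]
    by simp
  then obtain v where v: "?g y = ereal v"
    using rockafellar_fun_not_MInfty[of p0 \<Phi> a0, OF p0, of y] by (cases "?g y") auto
  have "ereal (blinfun_apply (z - y) q) \<le> ?g z - ?g y" for z
    using rockafellar_fun_subgradient_ineq[OF q p0, of z] rockafellar_fun_not_MInfty[of p0 \<Phi> a0, OF p0, of z]
    unfolding v by (cases "?g z") auto
  then show ?thesis unfolding subdiff_X_def using v by auto
qed

theorem mainTheorem10: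
  fixes \<Phi> :: "('a::banach \<Rightarrow>\<^sub>L real) \<Rightarrow> 'a set"
  assumes "wstar_max_cyclically_monotone \<Phi>"
    and "\<exists>xs. \<Phi> xs \<noteq> {}"
  shows "\<exists>g :: ('a \<Rightarrow>\<^sub>L real) \<Rightarrow> ereal. proper_fun g \<and> convex_efun g \<and> wstar_lsc g \<and>
           (\<forall>xs. \<Phi> xs = subdiff_X g xs)"
proof -
  obtain a0 p0 where p0: "p0 \<in> \<Phi> a0" using assms(2) by blast
  have cm: "wstar_cyclically_monotone \<Phi>"
    and maximal: "\<And>\<Psi>. wstar_cyclically_monotone \<Psi> \<Longrightarrow> (\<forall>xs. \<Phi> xs \<subseteq> \<Psi> xs) \<Longrightarrow> \<Psi> = \<Phi>"
    using assms(1) unfolding wstar_max_cyclically_monotone_def by blast+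
  define g where "g = rockafellar_fun \<Phi> a0 p0"
  have not_MInfty: "\<forall>y. g y \<noteq> -\<infinity>"
    unfolding g_def using rockafellar_fun_not_MInfty[of p0 \<Phi> a0, OF p0] by blast
  moreover have "g a0 \<noteq> \<infinity>"
    using rockafellar_fun_base_nonpos[OF cm, of a0 p0] unfolding g_def by auto
  ultimately have "proper_fun g" unfolding proper_fun_def by blast
  moreover have "convex_efun g" "wstar_lsc g"
    unfolding g_def rockafellar_fun_eq_SUP_affine
    by (rule convex_efun_SUP_affine, rule wstar_lsc_SUP_affine)
  moreover have "subdiff_X g = \<Phi>"
    using maximal[OF wstar_cyclically_monotone_subdiff_X[OF not_MInfty]]
      mem_subdiff_X_rockafellar_fun[OF cm p0] unfolding g_def by blast
  ultimately show ?thesis by metis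
qed

end
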